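(* Let $n\ge 1$ and let $0 \leq m \leq n-1$ be an integer. Then there exist a real normed space $X$ with $\dim X=n$ and a linear subspace $Y\subseteq X$ with $\dim Y=n-1$ such that $\dim \mathcal{P}_{\min}(X, Y)=m$. Moreover, if $0 \leq m \leq n-3$, then $X$ and $Y$ can be chosen so that in addition $\lambda(Y, X) > 1$.
   Context: A projection onto $Y$ is a linear $P:X\to Y$ with $P|_Y=\mathrm{id}_Y$; $\lambda(Y,X)$ is the infimum of the operator norms of such projections and $\mathcal{P}_{\min}(X,Y)$ is the set of projections of norm $\lambda(Y,X)$. $\dim \mathcal{P}_{\min}(X,Y)$ is the affine dimension of this convex subset of the space $\mathcal{L}(X,X)$ of linear operators on $X$ (the smallest dimension of an affine subspace containing it). *)

theory Defs
  imports "HOL-Analysis.Analysis"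
begin

text \<open>A finite-dimensional real normed space of dimension n is modelled (up to
isometric isomorphism) as real^'n with CARD('n) = n equipped with an arbitrary norm N.
Linear operators on X are represented by their matrices (real^'n^'n, acting via *v),
so that the space L(X,X) is a Euclidean space and affine dimension is aff_dim.\<close>

definition is_norm :: "('a::real_vector \<Rightarrow> real) \<Rightarrow> bool" where
  "is_norm N \<longleftrightarrow>
     (\<forall>x. 0 \<le> N x) \<and> (\<forall>x. N x = 0 \<longleftrightarrow> x = 0) \<and>
     (\<forall>c x. N (c *\<^sub>R x) = \<bar>c\<bar> * N x) \<and> (\<forall>x y. N (x + y) \<le> N x + N y)"

definition op_norm :: "((real^'n) \<Rightarrow> real) \<Rightarrow> real^'n^'n \<Rightarrow> real" where
  "op_norm N A = Sup {N (A *v x) | x. N x \<le> 1}"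

definition is_projection :: "(real^'n) set \<Rightarrow> real^'n^'n \<Rightarrow> bool" where
  "is_projection Y A \<longleftrightarrow> (\<forall>x. A *v x \<in> Y) \<and> (\<forall>y\<in>Y. A *v y = y)"

definition proj_const :: "((real^'n) \<Rightarrow> real) \<Rightarrow> (real^'n) set \<Rightarrow> real" where
  "proj_const N Y = Inf {op_norm N A | A. is_projection Y A}"

definition Pmin :: "((real^'n) \<Rightarrow> real) \<Rightarrow> (real^'n) set \<Rightarrow> (real^'n^'n) set" where
  "Pmin N Y = {A. is_projection Y A \<and> op_norm N A = proj_const N Y}"

end

theory Submission
  imports Defs
begin

(*
  Every projection onto a hyperplane Y = {x. a . x = 0} has the form
  P_z x = x - (a . x) z with a . z = 1, and z |-> P_z is an injective affine map,
  so the affine dimension of the set of minimal projections is that of the set M of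
  those z for which the operator norm of P_z is minimal. Both constructions compute
  M explicitly: the norm of P_z is bounded from above on the unit ball, and from
  below by test vectors that are signed sums of unit vectors.

  For the first statement (n >= 2) take the norm max (sum_{i in V} |x_i|) (max_i |x_i|)
  with V = {i0} u U, |U| = m, and a = e_i0: the minimal norm is 1, and M consists of
  the e_i0 + w with w supported on U and of l1-norm at most 1, an m-dimensional set.
  For n = 1, Y = {0} carries the single projection 0.

  For the second statement take the sup-norm and for a the indicator vector of a set K
  of k = n - m >= 3 coordinates: the minimal norm is 2 - 2/k > 1, and M consists of
  the z equal to 1/k on K whose other m coordinates are at most (k - 2)/k^2 in
  absolute value.
*)

lemma infnorm_le_cart_iff: "infnorm (x::real^'n) \<le> c \<longleftrightarrow> (\<forall>i. \<bar>x$i\<bar> \<le> c)"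
proof -
  have "infnorm x = Max (range (\<lambda>i. \<bar>x$i\<bar>))"
    unfolding infnorm_cart by (simp add: cSup_eq_Max full_SetCompr_eq)
  then show ?thesis by simp
qed

lemma
  assumes "is_norm N"
  shows is_norm_nonneg: "0 \<le> N x"
    and is_norm_zero: "N 0 = 0"
    and is_norm_scaleR: "N (c *\<^sub>R x) = \<bar>c\<bar> * N x"
    and is_norm_triangle: "N (x + y) \<le> N x + N y"
  using assms by (simp_all add: is_norm_def)

lemma is_norm_infnorm: "is_norm (infnorm :: 'a::euclidean_space \<Rightarrow> real)"
  unfolding is_norm_def by (simp add: infnorm_pos_le infnorm_eq_0 infnorm_mul infnorm_triangle)

definition l1_inf_norm :: "'n set \<Rightarrow> real^'n \<Rightarrow> real" where
  "l1_inf_norm V x = max (\<Sum>i\<in>V. \<bar>x$i\<bar>) (infnorm x)"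

lemma l1_inf_norm_le_iff:
  "l1_inf_norm V x \<le> c \<longleftrightarrow> (\<Sum>i\<in>V. \<bar>x$i\<bar>) \<le> c \<and> (\<forall>i. \<bar>x$i\<bar> \<le> c)"
  by (simp add: l1_inf_norm_def infnorm_le_cart_iff)

lemma infnorm_le_l1_inf_norm: "infnorm x \<le> l1_inf_norm V x"
  by (simp add: l1_inf_norm_def)

lemma sum_abs_le_l1_inf_norm: "(\<Sum>i\<in>V. \<bar>x$i\<bar>) \<le> l1_inf_norm V x"
  by (simp add: l1_inf_norm_def)

lemma is_norm_l1_inf_norm:
  fixes V :: "'n::finite set"
  shows "is_norm (l1_inf_norm V)"
  unfolding is_norm_def
proof (intro conjI allI)
  fix x y :: "real^'n" and c :: real
  let ?s = "\<lambda>x::real^'n. \<Sum>i\<in>V. \<bar>x$i\<bar>"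
  show "0 \<le> l1_inf_norm V x"
    using infnorm_pos_le[of x] by (simp add: l1_inf_norm_def le_max_iff_disj)
  show "l1_inf_norm V x = 0 \<longleftrightarrow> x = 0"
    using infnorm_pos_le[of x] infnorm_eq_0[of x] sum_nonneg[of V "\<lambda>i. \<bar>x$i\<bar>"]
    by (auto simp: l1_inf_norm_def max_def)
  have "?s (c *\<^sub>R x) = \<bar>c\<bar> * ?s x"
    by (simp add: abs_mult sum_distrib_left)
  then show "l1_inf_norm V (c *\<^sub>R x) = \<bar>c\<bar> * l1_inf_norm V x"
    by (simp add: l1_inf_norm_def infnorm_mul max_mult_distrib_left)
  have "?s (x + y) \<le> ?s x + ?s y"
    by (simp add: sum.distrib[symmetric] sum_mono abs_triangle_ineq)
  then show "l1_inf_norm V (x + y) \<le> l1_inf_norm V x + l1_inf_norm V y"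
    using infnorm_triangle[of x y] unfolding l1_inf_norm_def max_def by auto
qed

lemma is_norm_sum_le:
  assumes "is_norm N"
  shows "N (sum f S) \<le> (\<Sum>i\<in>S. N (f i))"
proof (induction S rule: infinite_finite_induct)
  case (insert i S)
  then show ?case
    using is_norm_triangle[OF assms, of "f i" "sum f S"] by simp
qed (simp_all add: is_norm_zero[OF assms])

lemma is_norm_matrix_vector_le:
  fixes A :: "real^'n^'n"
  assumes N: "is_norm N" and dom: "\<And>x. infnorm x \<le> N x"
  shows "N (A *v x) \<le> (\<Sum>i\<in>UNIV. N (column i A)) * N x"
proof -
  have "N (A *v x) \<le> (\<Sum>i\<in>UNIV. N (x$i *\<^sub>R column i A))"
    unfolding matrix_mult_sum scalar_mult_eq_scaleR by (rule is_norm_sum_le[OF N])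
  also have "\<dots> = (\<Sum>i\<in>UNIV. \<bar>x$i\<bar> * N (column i A))"
    by (simp add: is_norm_scaleR[OF N])
  also have "\<dots> \<le> (\<Sum>i\<in>UNIV. N x * N (column i A))"
    using component_le_infnorm_cart[of x] dom[of x] is_norm_nonneg[OF N]
    by (intro sum_mono mult_right_mono) (auto intro: order_trans)
  finally show ?thesis by (simp add: sum_distrib_left mult.commute)
qed

lemma op_norm_le:
  assumes "is_norm N" and "\<And>x. N x \<le> 1 \<Longrightarrow> N (A *v x) \<le> c"
  shows "op_norm N A \<le> c"
  unfolding op_norm_def
proof (rule cSup_least)
  have "N 0 \<le> 1" using is_norm_zero[OF assms(1)] by simp
  then show "{N (A *v x) |x. N x \<le> 1} \<noteq> {}" by blast
qed (use assms(2) in blast)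

(* Every norm on real^'n dominates a multiple of infnorm; the constant 1 suffices for
   the norms used below and keeps op_norm N A from being the Sup of an unbounded set. *)
lemma op_norm_ge:
  assumes N: "is_norm N" and "\<And>x. infnorm x \<le> N x" and "N x \<le> 1"
  shows "N (A *v x) \<le> op_norm N A"
  unfolding op_norm_def
proof (rule cSup_upper)
  let ?C = "\<Sum>i\<in>UNIV. N (column i A)"
  have "0 \<le> ?C"
    using is_norm_nonneg[OF N] by (simp add: sum_nonneg)
  then have "N (A *v y) \<le> ?C" if "N y \<le> 1" for y
    using is_norm_matrix_vector_le[OF assms(1,2), of A y] that mult_left_le[of "N y" ?C]
      is_norm_nonneg[OF N, of y]
    by (simp add: mult.commute)
  then show "bdd_above {N (A *v y) |y. N y \<le> 1}" by (intro bdd_aboveI[where M = ?C]) blast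
qed (use assms(3) in blast)

definition hyperplane_proj :: "real^'n \<Rightarrow> real^'n \<Rightarrow> real^'n^'n" where
  "hyperplane_proj a z = mat 1 - (\<chi> i j. z$i * a$j)"

lemma hyperplane_proj_apply: "hyperplane_proj a z *v x = x - (a \<bullet> x) *\<^sub>R z"
proof -
  have "(\<chi> i j. z$i * a$j) *v x = (a \<bullet> x) *\<^sub>R z"
    by (auto simp: vec_eq_iff matrix_vector_mult_def inner_vec_def sum_distrib_right intro!: sum.cong)
  then show ?thesis
    by (simp add: hyperplane_proj_def matrix_vector_mult_diff_rdistrib)
qed

lemma is_projection_hyperplane_iff:
  fixes a :: "real^'n"
  assumes "a \<noteq> 0"
  shows "is_projection {x. a \<bullet> x = 0} A \<longleftrightarrow> (\<exists>z. a \<bullet> z = 1 \<and> A = hyperplane_proj a z)"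
proof
  assume A: "is_projection {x. a \<bullet> x = 0} A"
  define e where "e = (1 / (a \<bullet> a)) *\<^sub>R a"
  have ae: "a \<bullet> e = 1" using assms by (simp add: e_def)
  define z where "z = e - A *v e"
  have "a \<bullet> (A *v e) = 0" using A unfolding is_projection_def by auto
  then have az: "a \<bullet> z = 1" using ae by (simp add: z_def inner_diff_right)
  have "A *v x = hyperplane_proj a z *v x" for x
  proof -
    have "a \<bullet> (x - (a \<bullet> x) *\<^sub>R e) = 0" using ae by (simp add: inner_diff_right)
    then have "A *v (x - (a \<bullet> x) *\<^sub>R e) = x - (a \<bullet> x) *\<^sub>R e"
      using A unfolding is_projection_def by blast
    then show ?thesis
      by (simp add: hyperplane_proj_apply z_def matrix_vector_mult_diff_distrib
          matrix_vector_mult_scaleR algebra_simps)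
  qed
  then show "\<exists>z. a \<bullet> z = 1 \<and> A = hyperplane_proj a z"
    using az by (auto simp: matrix_eq)
next
  assume "\<exists>z. a \<bullet> z = 1 \<and> A = hyperplane_proj a z"
  then show "is_projection {x. a \<bullet> x = 0} A"
    by (auto simp: is_projection_def hyperplane_proj_apply inner_diff_right)
qed

lemma aff_dim_hyperplane_proj_image:
  fixes a :: "real^'n"
  assumes "a \<noteq> 0"
  shows "aff_dim (hyperplane_proj a ` M) = aff_dim M"
proof -
  define L where "L = (\<lambda>z::real^'n. - (\<chi> i j. z$i * a$j))"
  have lin: "linear L"
    by (rule linearI) (simp_all add: L_def vec_eq_iff algebra_simps)
  obtain j where j: "a$j \<noteq> 0" using assms by (auto simp: vec_eq_iff)
  have "inj L"
    by (rule injI) (use j in \<open>auto simp: L_def vec_eq_iff\<close>)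
  moreover have "hyperplane_proj a ` M = (+) (mat 1) ` (L ` M)"
    by (auto simp: hyperplane_proj_def L_def)
  ultimately show ?thesis
    using aff_dim_injective_linear_image[OF lin] by (simp add: aff_dim_translation_eq)
qed

lemma Pmin_hyperplane:
  fixes a :: "real^'n"
  assumes "a \<noteq> 0" and "z0 \<in> M"
    and minimal: "\<And>z. z \<in> M \<Longrightarrow> a \<bullet> z = 1 \<and> op_norm N (hyperplane_proj a z) = l"
    and not_minimal: "\<And>z. a \<bullet> z = 1 \<Longrightarrow> z \<notin> M \<Longrightarrow> l < op_norm N (hyperplane_proj a z)"
  shows "proj_const N {x. a \<bullet> x = 0} = l"
    and "Pmin N {x. a \<bullet> x = 0} = hyperplane_proj a ` M"
proof -
  have norms: "{op_norm N A |A. is_projection {x. a \<bullet> x = 0} A}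
      = {op_norm N (hyperplane_proj a z) |z. a \<bullet> z = 1}"
    unfolding is_projection_hyperplane_iff[OF assms(1)] by blast
  have ge: "l \<le> op_norm N (hyperplane_proj a z)" if "a \<bullet> z = 1" for z
    using minimal[of z] not_minimal[OF that] by (cases "z \<in> M") (simp_all add: less_imp_le)
  show pc: "proj_const N {x. a \<bullet> x = 0} = l"
    unfolding proj_const_def norms
  proof (rule cInf_eq_minimum)
    show "l \<in> {op_norm N (hyperplane_proj a z) |z. a \<bullet> z = 1}"
      using minimal[OF assms(2)] by force
    show "l \<le> y" if "y \<in> {op_norm N (hyperplane_proj a z) |z. a \<bullet> z = 1}" for y
      using that ge by blast
  qed
  show "Pmin N {x. a \<bullet> x = 0} = hyperplane_proj a ` M"
  proof (rule set_eqI)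
    fix A
    have "(\<exists>z. a \<bullet> z = 1 \<and> A = hyperplane_proj a z \<and> op_norm N A = l) \<longleftrightarrow>
        (\<exists>z\<in>M. A = hyperplane_proj a z)"
      using minimal not_minimal by (metis less_irrefl)
    then show "A \<in> Pmin N {x. a \<bullet> x = 0} \<longleftrightarrow> A \<in> hyperplane_proj a ` M"
      unfolding Pmin_def pc is_projection_hyperplane_iff[OF assms(1)] by blast
  qed
qed

lemma minimal_projections_onto_hyperplane:
  fixes a :: "real^'n"
  assumes N: "is_norm N" and dom: "\<And>x. infnorm x \<le> N x" and "a \<noteq> 0" and "z0 \<in> M"
    and centre: "\<And>z. z \<in> M \<Longrightarrow> a \<bullet> z = 1"
    and upper: "\<And>z x. z \<in> M \<Longrightarrow> N x \<le> 1 \<Longrightarrow> N (x - (a \<bullet> x) *\<^sub>R z) \<le> l"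
    and lower: "\<And>z. a \<bullet> z = 1 \<Longrightarrow> \<exists>x. N x \<le> 1 \<and> l \<le> N (x - (a \<bullet> x) *\<^sub>R z)"
    and strict: "\<And>z. a \<bullet> z = 1 \<Longrightarrow> z \<notin> M \<Longrightarrow> \<exists>x. N x \<le> 1 \<and> l < N (x - (a \<bullet> x) *\<^sub>R z)"
  shows "proj_const N {x. a \<bullet> x = 0} = l"
    and "aff_dim (Pmin N {x. a \<bullet> x = 0}) = aff_dim M"
proof -
  have witness: "l \<le> op_norm N (hyperplane_proj a z)" if "N x \<le> 1" "l \<le> N (x - (a \<bullet> x) *\<^sub>R z)" for x z
    using op_norm_ge[OF N dom that(1), of "hyperplane_proj a z"] that(2)
    by (simp add: hyperplane_proj_apply)
  have "a \<bullet> z = 1 \<and> op_norm N (hyperplane_proj a z) = l" if "z \<in> M" for z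
    using centre[OF that] lower[OF centre[OF that]] witness upper[OF that]
    by (auto intro!: antisym op_norm_le[OF N] simp: hyperplane_proj_apply)
  moreover have "l < op_norm N (hyperplane_proj a z)" if "a \<bullet> z = 1" "z \<notin> M" for z
    using strict[OF that] op_norm_ge[OF N dom, of _ "hyperplane_proj a z"]
    by (force simp: hyperplane_proj_apply)
  ultimately show "proj_const N {x. a \<bullet> x = 0} = l"
    and "aff_dim (Pmin N {x. a \<bullet> x = 0}) = aff_dim M"
    using Pmin_hyperplane[OF \<open>a \<noteq> 0\<close> \<open>z0 \<in> M\<close>] aff_dim_hyperplane_proj_image[OF \<open>a \<noteq> 0\<close>]
    by simp_all
qed

lemma is_projection_zero_iff: "is_projection {0} A \<longleftrightarrow> A = 0"
proof
  assume "is_projection {0} A"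
  then have "A *v x = 0 *v x" for x
    by (simp add: is_projection_def)
  then show "A = 0"
    by (simp add: matrix_eq)
qed (simp add: is_projection_def)

lemma Pmin_zero_subspace: "Pmin N {0} = {0}"
proof -
  have "{op_norm N A |A. is_projection {0} A} = {op_norm N 0}"
    by (simp add: is_projection_zero_iff)
  then show ?thesis
    by (auto simp: Pmin_def proj_const_def is_projection_zero_iff)
qed

lemma aff_dim_eq_card_free_coordinates:
  fixes M :: "(real^'n) set" and K :: "'n set"
  assumes "z0 \<in> M" and fixed: "\<And>z i. z \<in> M \<Longrightarrow> i \<in> K \<Longrightarrow> z$i = z0$i"
    and "c \<noteq> 0" and free: "\<And>j. j \<notin> K \<Longrightarrow> z0 + c *\<^sub>R axis j 1 \<in> M"
  shows "aff_dim M = card (-K)"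
proof -
  define S where "S = (+) (- z0) ` M"
  define E where "E = {x::real^'n. \<forall>i. i \<notin> -K \<longrightarrow> x$i = 0}"
  have subspace: "subspace E" and dim: "dim E = card (-K)"
    using subspace_substandard_cart[where 'a=real, of "\<lambda>i. i \<notin> -K"]
      dim_substandard_cart[where 'a=real, of "-K"]
    by (simp_all add: E_def subspace_vec_eq dim_vec_eq)
  have "S \<subseteq> E"
    using fixed by (auto simp: S_def E_def)
  moreover have "E \<subseteq> span S"
  proof
    fix x assume "x \<in> E"
    have "x$j *\<^sub>R axis j 1 \<in> span S" for j
    proof (cases "j \<in> K")
      case True
      then show ?thesis using \<open>x \<in> E\<close> by (simp add: E_def span_zero)
    next
      case False
      have "c *\<^sub>R axis j 1 \<in> S"
        using free[OF False] by (force simp: S_def)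
      then have "(x$j / c) *\<^sub>R (c *\<^sub>R axis j 1) \<in> span S"
        by (intro span_mul span_base)
      then show ?thesis using \<open>c \<noteq> 0\<close> by simp
    qed
    then have "(\<Sum>j\<in>UNIV. x$j *\<^sub>R axis j 1) \<in> span S"
      by (rule span_sum)
    then show "x \<in> span S"
      using basis_expansion[of x] by (simp add: scalar_mult_eq_scaleR)
  qed
  ultimately have "span S = E"
    using span_minimal[OF _ subspace] by blast
  then have "dim S = card (-K)"
    using dim_span[of S] dim by simp
  moreover have "aff_dim M = dim S"
    unfolding S_def by (rule aff_dim_eq_dim) (use \<open>z0 \<in> M\<close> hull_subset[of M affine] in blast)
  ultimately show ?thesis by simp
qed

lemma exists_ge_average:
  fixes f :: "'a \<Rightarrow> real"
  assumes "finite A" "A \<noteq> {}"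
  shows "\<exists>i\<in>A. sum f A / card A \<le> f i"
proof (rule ccontr)
  assume "\<not> ?thesis"
  then have "sum f A < (\<Sum>i\<in>A. sum f A / card A)"
    using assms by (intro sum_strict_mono) auto
  then show False using assms by simp
qed

lemma exists_gt_average:
  fixes f :: "'a \<Rightarrow> real"
  assumes "finite A" and "i \<in> A" and "f i \<noteq> sum f A / card A"
  shows "\<exists>j\<in>A. sum f A / card A < f j"
proof (rule ccontr)
  assume "\<not> ?thesis"
  then have "\<forall>j\<in>A. f j \<le> sum f A / card A" and "f i < sum f A / card A"
    using assms by (auto simp: not_less)
  then have "sum f A < (\<Sum>j\<in>A. sum f A / card A)"
    using assms by (intro sum_strict_mono_ex1) auto
  then show False using assms by (cases "A = {}") auto
qed

lemma abs_sgn_add_mult: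
  fixes t c :: real
  assumes "t \<noteq> 0" "0 \<le> c"
  shows "\<bar>sgn t + c * t\<bar> = 1 + c * \<bar>t\<bar>"
proof (cases "0 < t")
  case True
  then have "0 \<le> c * t" using assms(2) by simp
  then show ?thesis using True by simp
next
  case False
  then have "c * t \<le> 0" using assms by (simp add: mult_nonneg_nonpos)
  then show ?thesis using False assms(1) by simp
qed

definition indicator_vec :: "'n set \<Rightarrow> real^'n" where
  "indicator_vec K = (\<chi> i. if i \<in> K then 1 else 0)"

lemma inner_indicator_vec: "indicator_vec K \<bullet> x = (\<Sum>i\<in>K. x$i)"
proof -
  have "indicator_vec K \<bullet> x = (\<Sum>i\<in>UNIV. if i \<in> K then x$i else 0)"
    unfolding inner_vec_def by (intro sum.cong) (auto simp: indicator_vec_def)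
  then show ?thesis
    by (simp add: sum.If_cases)
qed

lemma indicator_vec_nonzero: "K \<noteq> {} \<Longrightarrow> indicator_vec K \<noteq> 0"
  by (auto simp: indicator_vec_def vec_eq_iff)

locale indicator_hyperplane =
  fixes K :: "'n::finite set"
  assumes three_le_card: "3 \<le> card K"
begin

definition k :: real where "k = real (card K)"

(* (k - 2)/k^2 is the largest |z_j| with 1 + k |z_j| <= 2 - 2/k, the norm forced by
   the coordinates in K. *)
definition minimal_centres :: "(real^'n) set" where
  "minimal_centres =
     {z. (\<forall>i\<in>K. z$i = 1 / k) \<and> (\<forall>j. j \<notin> K \<longrightarrow> \<bar>z$j\<bar> \<le> (k - 2) / k\<^sup>2)}"

lemma K_nonempty: "K \<noteq> {}"
proof
  assume "K = {}"
  then show False using three_le_card by simp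
qed

lemma k_ge_3: "3 \<le> k"
  using three_le_card by (simp add: k_def)

lemma k_pos: "0 < k"
  using k_ge_3 by simp

lemma k_nonzero: "k \<noteq> 0"
  using k_pos by simp

lemma inner_minimal_centre: "z \<in> minimal_centres \<Longrightarrow> indicator_vec K \<bullet> z = 1"
  using k_nonzero by (simp add: minimal_centres_def inner_indicator_vec k_def)

lemma proj_coordinate_in_K:
  assumes "infnorm x \<le> 1" "i \<in> K" "z$i = 1 / k"
  shows "\<bar>(x - (indicator_vec K \<bullet> x) *\<^sub>R z)$i\<bar> \<le> 2 - 2 / k"
proof -
  have x: "\<bar>x$j\<bar> \<le> 1" for j
    using assms(1) by (simp add: infnorm_le_cart_iff)
  have "(\<Sum>j\<in>K - {i}. x$i - x$j) = (\<Sum>j\<in>K. x$i - x$j)"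
    using sum.remove[of K i "\<lambda>j. x$i - x$j"] assms(2) by simp
  also have "\<dots> = k * x$i - indicator_vec K \<bullet> x"
    by (simp add: sum_subtractf inner_indicator_vec k_def)
  finally have eq: "(x - (indicator_vec K \<bullet> x) *\<^sub>R z)$i = (\<Sum>j\<in>K - {i}. x$i - x$j) / k"
    using assms(3) k_nonzero by (simp add: diff_divide_distrib)
  have "\<bar>\<Sum>j\<in>K - {i}. x$i - x$j\<bar> \<le> (\<Sum>j\<in>K - {i}. \<bar>x$i - x$j\<bar>)"
    by (rule sum_abs)
  also have "\<dots> \<le> (\<Sum>j\<in>K - {i}. 2)"
    using x[of i] x by (intro sum_mono) (metis abs_triangle_ineq4 add_mono one_add_one order_trans)
  also have "\<dots> = 2 * (k - 1)"
    using assms(2) three_le_card by (simp add: card_Diff_singleton of_nat_diff k_def)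
  finally show ?thesis
    unfolding eq using k_pos by (simp add: abs_divide field_simps)
qed

lemma proj_coordinate_not_in_K:
  assumes "infnorm x \<le> 1" "\<bar>z$j\<bar> \<le> (k - 2) / k\<^sup>2"
  shows "\<bar>(x - (indicator_vec K \<bullet> x) *\<^sub>R z)$j\<bar> \<le> 2 - 2 / k"
proof -
  have x: "\<bar>x$i\<bar> \<le> 1" for i
    using assms(1) by (simp add: infnorm_le_cart_iff)
  have "\<bar>indicator_vec K \<bullet> x\<bar> \<le> k"
    unfolding inner_indicator_vec
    using order_trans[OF sum_abs sum_bounded_above[of K "\<lambda>i. \<bar>x$i\<bar>" 1]] x by (simp add: k_def)
  then have "\<bar>(indicator_vec K \<bullet> x) * z$j\<bar> \<le> k * ((k - 2) / k\<^sup>2)"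
    unfolding abs_mult using assms(2) by (intro mult_mono) auto
  also have "\<dots> = 1 - 2 / k"
    using k_nonzero by (simp add: field_simps power2_eq_square)
  finally show ?thesis
    using x[of j] by (simp add: abs_triangle_ineq4[THEN order_trans])
qed

lemma proj_minimal_centre_le:
  assumes "z \<in> minimal_centres" "infnorm x \<le> 1"
  shows "infnorm (x - (indicator_vec K \<bullet> x) *\<^sub>R z) \<le> 2 - 2 / k"
  unfolding infnorm_le_cart_iff
proof
  fix i
  show "\<bar>(x - (indicator_vec K \<bullet> x) *\<^sub>R z)$i\<bar> \<le> 2 - 2 / k"
    using assms proj_coordinate_in_K proj_coordinate_not_in_K
    by (cases "i \<in> K") (auto simp: minimal_centres_def)
qed

lemma test_vector_in_K:
  assumes "i \<in> K" "1 / k \<le> z$i"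
  obtains x where "infnorm x \<le> 1"
    and "2 - 2 / k \<le> infnorm (x - (indicator_vec K \<bullet> x) *\<^sub>R z)"
    and "1 / k < z$i \<Longrightarrow> 2 - 2 / k < infnorm (x - (indicator_vec K \<bullet> x) *\<^sub>R z)"
proof
  define x :: "real^'n" where "x = 2 *\<^sub>R axis i 1 - indicator_vec K"
  let ?y = "x - (indicator_vec K \<bullet> x) *\<^sub>R z"
  show "infnorm x \<le> 1"
    using assms by (simp add: x_def infnorm_le_cart_iff indicator_vec_def axis_def)
  have ax: "indicator_vec K \<bullet> x = 2 - k"
    unfolding x_def inner_indicator_vec using assms(1)
    by (simp add: indicator_vec_def axis_def k_def sum_subtractf sum_distrib_left[symmetric])
  have xi: "x$i = 1"
    using assms(1) by (simp add: x_def indicator_vec_def)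
  have "?y$i = x$i - (indicator_vec K \<bullet> x) * z$i"
    by simp
  also have "\<dots> = 2 - 2 / k + (k - 2) * (z$i - 1 / k)"
    unfolding ax xi using k_nonzero by (simp add: field_simps)
  finally have y: "?y$i = 2 - 2 / k + (k - 2) * (z$i - 1 / k)" .
  have "?y$i \<le> infnorm ?y"
    using component_le_infnorm_cart by (rule order_trans[OF abs_ge_self])
  moreover have "0 \<le> (k - 2) * (z$i - 1 / k)"
    using k_ge_3 assms(2) by simp
  ultimately show "2 - 2 / k \<le> infnorm ?y"
    unfolding y by linarith
  assume "1 / k < z$i"
  then have "0 < (k - 2) * (z$i - 1 / k)"
    using k_ge_3 by simp
  with \<open>?y$i \<le> infnorm ?y\<close> show "2 - 2 / k < infnorm ?y"
    unfolding y by linarith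
qed

lemma test_vector_off_K:
  assumes "j \<notin> K" "z$j \<noteq> 0"
  obtains x where "infnorm x \<le> 1"
    and "1 + k * \<bar>z$j\<bar> \<le> infnorm (x - (indicator_vec K \<bullet> x) *\<^sub>R z)"
proof
  define x :: "real^'n" where "x = indicator_vec K - sgn (z$j) *\<^sub>R axis j 1"
  let ?y = "x - (indicator_vec K \<bullet> x) *\<^sub>R z"
  show "infnorm x \<le> 1"
    using assms(1) by (simp add: x_def infnorm_le_cart_iff indicator_vec_def axis_def abs_sgn_eq)
  have "(\<Sum>i\<in>K. x$i) = (\<Sum>i\<in>K. 1)"
    by (rule sum.cong) (use assms(1) in \<open>auto simp: x_def indicator_vec_def axis_def\<close>)
  then have ax: "indicator_vec K \<bullet> x = k"
    by (simp add: inner_indicator_vec k_def)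
  have xj: "x$j = - sgn (z$j)"
    using assms(1) by (simp add: x_def indicator_vec_def)
  have "?y$j = x$j - (indicator_vec K \<bullet> x) * z$j"
    by simp
  also have "\<dots> = - (sgn (z$j) + k * z$j)"
    unfolding ax xj by simp
  also have "\<bar>\<dots>\<bar> = 1 + k * \<bar>z$j\<bar>"
    using abs_sgn_add_mult[OF assms(2) less_imp_le[OF k_pos]] by simp
  finally show "1 + k * \<bar>z$j\<bar> \<le> infnorm ?y"
    using component_le_infnorm_cart[of ?y j] by simp
qed

lemma average_on_K: "indicator_vec K \<bullet> z = 1 \<Longrightarrow> (\<Sum>i\<in>K. z$i) / card K = 1 / k"
  by (simp add: inner_indicator_vec k_def)

lemma proj_ge:
  assumes "indicator_vec K \<bullet> z = 1"
  shows "\<exists>x. infnorm x \<le> 1 \<and> 2 - 2 / k \<le> infnorm (x - (indicator_vec K \<bullet> x) *\<^sub>R z)"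
proof -
  obtain i where "i \<in> K" "1 / k \<le> z$i"
    using exists_ge_average[OF _ K_nonempty, of "\<lambda>i. z$i"] average_on_K[OF assms] by auto
  then show ?thesis
    by (rule test_vector_in_K) blast
qed

lemma proj_non_minimal_centre_gt:
  assumes "indicator_vec K \<bullet> z = 1" "z \<notin> minimal_centres"
  shows "\<exists>x. infnorm x \<le> 1 \<and> 2 - 2 / k < infnorm (x - (indicator_vec K \<bullet> x) *\<^sub>R z)"
proof (cases "\<forall>i\<in>K. z$i = 1 / k")
  case True
  then obtain j where j: "j \<notin> K" "(k - 2) / k\<^sup>2 < \<bar>z$j\<bar>"
    using assms(2) by (auto simp: minimal_centres_def not_le)
  moreover have "0 \<le> (k - 2) / k\<^sup>2"
    using k_ge_3 by simp
  ultimately have "z$j \<noteq> 0"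
    by auto
  have "2 - 2 / k = 1 + k * ((k - 2) / k\<^sup>2)"
    using k_nonzero by (simp add: field_simps power2_eq_square)
  also have "\<dots> < 1 + k * \<bar>z$j\<bar>"
    using j(2) k_pos by (intro add_strict_left_mono mult_strict_left_mono)
  finally have bound: "2 - 2 / k < 1 + k * \<bar>z$j\<bar>" .
  obtain x where "infnorm x \<le> 1" "1 + k * \<bar>z$j\<bar> \<le> infnorm (x - (indicator_vec K \<bullet> x) *\<^sub>R z)"
    using test_vector_off_K[OF j(1) \<open>z$j \<noteq> 0\<close>] .
  with bound show ?thesis
    by (intro exI[of _ x]) simp
next
  case False
  then obtain i0 where "i0 \<in> K" "z$i0 \<noteq> 1 / k"
    by blast
  then obtain i where i: "i \<in> K" "1 / k < z$i"
    using exists_gt_average[OF finite[of K], of i0 "\<lambda>i. z$i", unfolded average_on_K[OF assms(1)]] by blast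
  obtain x where "infnorm x \<le> 1" "1 / k < z$i \<Longrightarrow> 2 - 2 / k < infnorm (x - (indicator_vec K \<bullet> x) *\<^sub>R z)"
    using test_vector_in_K[OF i(1) less_imp_le[OF i(2)]] by blast
  with i(2) show ?thesis
    by blast
qed

lemma minimal_projections:
  shows "proj_const infnorm {x. indicator_vec K \<bullet> x = 0} = 2 - 2 / card K"
    and "aff_dim (Pmin infnorm {x. indicator_vec K \<bullet> x = 0}) = card (-K)"
proof -
  let ?z0 = "(1 / k) *\<^sub>R indicator_vec K"
  have z0: "?z0 \<in> minimal_centres"
    using k_ge_3 by (simp add: minimal_centres_def indicator_vec_def)
  note hyperplane = minimal_projections_onto_hyperplane[OF is_norm_infnorm order_refl
      indicator_vec_nonzero[OF K_nonempty] z0 inner_minimal_centre proj_minimal_centre_le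
      proj_ge proj_non_minimal_centre_gt]
  from hyperplane(1) show "proj_const infnorm {x. indicator_vec K \<bullet> x = 0} = 2 - 2 / card K"
    by (simp add: k_def)
  have "aff_dim minimal_centres = card (-K)"
  proof (rule aff_dim_eq_card_free_coordinates[OF z0])
    show "(k - 2) / k\<^sup>2 \<noteq> 0"
      using k_ge_3 by simp
    show "z$i = ?z0$i" if "z \<in> minimal_centres" "i \<in> K" for z i
      using that unfolding minimal_centres_def by (simp add: indicator_vec_def)
    have "0 \<le> (k - 2) / k\<^sup>2"
      using k_ge_3 by simp
    then show "?z0 + ((k - 2) / k\<^sup>2) *\<^sub>R axis j 1 \<in> minimal_centres" if "j \<notin> K" for j
      using that unfolding minimal_centres_def by (auto simp: indicator_vec_def axis_def)
  qed
  with hyperplane(2) show "aff_dim (Pmin infnorm {x. indicator_vec K \<bullet> x = 0}) = card (-K)"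
    by simp
qed

end

locale coordinate_hyperplane =
  fixes i0 :: "'n::finite" and U :: "'n set"
  assumes i0_notin_U: "i0 \<notin> U"
begin

definition minimal_centres :: "(real^'n) set" where
  "minimal_centres =
     {z. z$i0 = 1 \<and> (\<forall>j. j \<notin> insert i0 U \<longrightarrow> z$j = 0) \<and> (\<Sum>i\<in>U. \<bar>z$i\<bar>) \<le> 1}"

lemma sum_insert_i0: "(\<Sum>i\<in>insert i0 U. f i) = f i0 + (\<Sum>i\<in>U. f i)"
  using i0_notin_U by simp

lemma proj_minimal_centre_le:
  assumes "z \<in> minimal_centres" and x: "l1_inf_norm (insert i0 U) x \<le> 1"
  shows "l1_inf_norm (insert i0 U) (x - (axis i0 1 \<bullet> x) *\<^sub>R z) \<le> 1"
proof -
  let ?y = "x - (axis i0 1 \<bullet> x) *\<^sub>R z"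
  have z: "z$i0 = 1" "\<And>j. j \<notin> insert i0 U \<Longrightarrow> z$j = 0" "(\<Sum>i\<in>U. \<bar>z$i\<bar>) \<le> 1"
    using assms(1) by (auto simp: minimal_centres_def)
  have y_i0: "?y$i0 = 0"
    using z(1) by (simp add: inner_axis')
  have "(\<Sum>i\<in>U. \<bar>?y$i\<bar>) \<le> (\<Sum>i\<in>U. \<bar>x$i\<bar> + \<bar>x$i0\<bar> * \<bar>z$i\<bar>)"
    by (intro sum_mono) (simp add: inner_axis' abs_mult[symmetric] abs_triangle_ineq4)
  also have "\<dots> \<le> (\<Sum>i\<in>U. \<bar>x$i\<bar>) + \<bar>x$i0\<bar>"
    using z(3) by (simp add: sum.distrib sum_distrib_left[symmetric] mult_left_le)
  also have "\<dots> \<le> 1"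
    using x sum_insert_i0[of "\<lambda>i. \<bar>x$i\<bar>"] by (simp add: l1_inf_norm_le_iff)
  finally have sum_U: "(\<Sum>i\<in>U. \<bar>?y$i\<bar>) \<le> 1" .
  have "\<bar>?y$i\<bar> \<le> 1" for i
  proof (cases "i \<in> insert i0 U")
    case True
    then show ?thesis
      using y_i0 sum_U member_le_sum[of i U "\<lambda>i. \<bar>?y$i\<bar>"] by auto
  next
    case False
    then show ?thesis
      using x z(2) by (simp add: l1_inf_norm_le_iff)
  qed
  then show ?thesis
    using sum_U y_i0 by (simp add: l1_inf_norm_le_iff sum_insert_i0)
qed

lemma proj_ge:
  assumes "j \<noteq> i0"
  shows "\<exists>x. l1_inf_norm (insert i0 U) x \<le> 1
            \<and> 1 \<le> l1_inf_norm (insert i0 U) (x - (axis i0 1 \<bullet> x) *\<^sub>R z)"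
proof (intro exI conjI)
  show "l1_inf_norm (insert i0 U) (axis j 1) \<le> 1"
    by (simp add: l1_inf_norm_le_iff axis_def sum.If_cases)
  have "1 \<le> infnorm (axis j 1 :: real^'n)"
    using component_le_infnorm_cart[of "axis j 1" j] by simp
  then show "1 \<le> l1_inf_norm (insert i0 U) (axis j 1 - (axis i0 1 \<bullet> axis j 1) *\<^sub>R z)"
    using assms infnorm_le_l1_inf_norm[of "axis j 1" "insert i0 U"]
    by (simp add: inner_axis_axis)
qed

lemma proj_non_minimal_centre_gt:
  assumes "axis i0 1 \<bullet> z = 1" "z \<notin> minimal_centres"
  shows "\<exists>x. l1_inf_norm (insert i0 U) x \<le> 1
            \<and> 1 < l1_inf_norm (insert i0 U) (x - (axis i0 1 \<bullet> x) *\<^sub>R z)"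
proof (cases "\<forall>j. j \<notin> insert i0 U \<longrightarrow> z$j = 0")
  case True
  have "1 < (\<Sum>i\<in>U. \<bar>z$i\<bar>)"
    using assms True by (auto simp: minimal_centres_def inner_axis')
  also have "\<dots> = (\<Sum>i\<in>U. \<bar>(axis i0 1 - z)$i\<bar>)"
    using i0_notin_U by (intro sum.cong) (auto simp: axis_def)
  also have "\<dots> \<le> (\<Sum>i\<in>insert i0 U. \<bar>(axis i0 1 - z)$i\<bar>)"
    by (simp add: sum_insert_i0)
  also have "\<dots> \<le> l1_inf_norm (insert i0 U) (axis i0 1 - z)"
    by (rule sum_abs_le_l1_inf_norm)
  finally have "1 < l1_inf_norm (insert i0 U) (axis i0 1 - (axis i0 1 \<bullet> (axis i0 1 :: real^'n)) *\<^sub>R z)"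
    by (simp add: inner_axis_axis)
  moreover have "l1_inf_norm (insert i0 U) (axis i0 1) \<le> 1"
    by (simp add: l1_inf_norm_le_iff axis_def sum.If_cases)
  ultimately show ?thesis
    by blast
next
  case False
  then obtain j where j: "j \<notin> insert i0 U" "z$j \<noteq> 0"
    by blast
  define x :: "real^'n" where "x = axis i0 1 - sgn (z$j) *\<^sub>R axis j 1"
  let ?y = "x - (axis i0 1 \<bullet> x) *\<^sub>R z"
  have "(\<Sum>i\<in>U. \<bar>x$i\<bar>) = 0"
    by (rule sum.neutral) (use j(1) i0_notin_U in \<open>auto simp: x_def axis_def\<close>)
  moreover have "x$i0 = 1"
    using j(1) by (auto simp: x_def axis_def)
  ultimately have "(\<Sum>i\<in>insert i0 U. \<bar>x$i\<bar>) = 1"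
    by (simp add: sum_insert_i0)
  then have x_norm: "l1_inf_norm (insert i0 U) x \<le> 1"
    using j(1) by (auto simp: l1_inf_norm_le_iff x_def axis_def abs_sgn_eq)
  have "axis i0 1 \<bullet> x = 1"
    using j(1) by (auto simp: x_def inner_diff_right inner_axis_axis)
  moreover have "x$j = - sgn (z$j)"
    using j(1) by (auto simp: x_def axis_def)
  ultimately have "?y$j = - (sgn (z$j) + z$j)"
    by simp
  then have "1 < \<bar>?y$j\<bar>"
    using abs_sgn_add_mult[OF j(2), of 1] j(2) by simp
  then have "1 < l1_inf_norm (insert i0 U) ?y"
    using component_le_infnorm_cart[of ?y j] infnorm_le_l1_inf_norm[of ?y "insert i0 U"] by linarith
  with x_norm show ?thesis
    by blast
qed

lemma minimal_projections:
  assumes "j \<noteq> i0"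
  shows "proj_const (l1_inf_norm (insert i0 U)) {x. axis i0 1 \<bullet> x = 0} = 1"
    and "aff_dim (Pmin (l1_inf_norm (insert i0 U)) {x. axis i0 1 \<bullet> x = 0}) = card U"
proof -
  have axis_nonzero_i0: "axis i0 (1::real) \<noteq> 0"
    by simp
  have z0: "axis i0 1 \<in> minimal_centres"
    using i0_notin_U by (simp add: minimal_centres_def axis_def)
  have centre: "axis i0 1 \<bullet> z = 1" if "z \<in> minimal_centres" for z
    using that by (simp add: minimal_centres_def inner_axis')
  note hyperplane = minimal_projections_onto_hyperplane[OF is_norm_l1_inf_norm
      infnorm_le_l1_inf_norm axis_nonzero_i0 z0 centre proj_minimal_centre_le
      proj_ge[OF assms] proj_non_minimal_centre_gt]
  from hyperplane(1) show "proj_const (l1_inf_norm (insert i0 U)) {x. axis i0 1 \<bullet> x = 0} = 1" .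
  have "aff_dim minimal_centres = card (- (- U))"
  proof (rule aff_dim_eq_card_free_coordinates[OF z0, of "- U" 1])
    show "z$i = axis i0 1 $ i" if "z \<in> minimal_centres" "i \<in> - U" for z i
      using that by (cases "i = i0") (auto simp: minimal_centres_def axis_def)
    show "axis i0 1 + 1 *\<^sub>R axis j 1 \<in> minimal_centres" if "j \<notin> - U" for j
      using that i0_notin_U by (auto simp: minimal_centres_def axis_def sum.distrib)
  qed simp
  with hyperplane(2) show "aff_dim (Pmin (l1_inf_norm (insert i0 U)) {x. axis i0 1 \<bullet> x = 0}) = card U"
    by simp
qed

end

lemma hyperplane_subspace_dim:
  fixes a :: "real^'n"
  assumes "a \<noteq> 0"
  shows "subspace {x. a \<bullet> x = 0}" and "dim {x. a \<bullet> x = 0} = CARD('n) - 1"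
  using subspace_hyperplane[of a] dim_hyperplane[OF assms] by simp_all

lemma exists_hyperplane_aff_dim_Pmin:
  assumes "m < CARD('n::finite)"
  shows "\<exists>(N :: real^'n \<Rightarrow> real) Y. is_norm N \<and> subspace Y \<and> dim Y = CARD('n) - 1 \<and>
           aff_dim (Pmin N Y) = int m"
proof (cases "CARD('n) = 1")
  case True
  then show ?thesis
    using assms is_norm_infnorm[where 'a="real^'n"] Pmin_zero_subspace[of "infnorm :: real^'n \<Rightarrow> real"]
    by (intro exI[of _ infnorm] exI[of _ "{0}"]) (simp add: subspace_0)
next
  case False
  then have "\<not> CARD('n) \<le> Suc 0"
    by (simp add: le_Suc_eq)
  then obtain i0 j :: 'n where "j \<noteq> i0"
    unfolding card_le_Suc0_iff_eq[OF finite] by blast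
  have "m \<le> card (- {i0})"
    using assms by (simp add: Compl_eq_Diff_UNIV card_Diff_subset)
  then obtain U where "U \<subseteq> - {i0}" "card U = m"
    by (rule obtain_subset_with_card_n)
  then have "coordinate_hyperplane i0 U"
    by unfold_locales auto
  then show ?thesis
    using coordinate_hyperplane.minimal_projections(2)[OF _ \<open>j \<noteq> i0\<close>]
      is_norm_l1_inf_norm hyperplane_subspace_dim[of "axis i0 1"] \<open>card U = m\<close>
    by (intro exI[of _ "l1_inf_norm (insert i0 U)"] exI[of _ "{x. axis i0 1 \<bullet> x = 0}"]) simp
qed

lemma exists_hyperplane_aff_dim_Pmin_proj_const_gt_1:
  assumes "m + 3 \<le> CARD('n::finite)"
  shows "\<exists>(N :: real^'n \<Rightarrow> real) Y. is_norm N \<and> subspace Y \<and> dim Y = CARD('n) - 1 \<and>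
           aff_dim (Pmin N Y) = int m \<and> proj_const N Y > 1"
proof -
  obtain K :: "'n set" where K: "card K = CARD('n) - m"
    using obtain_subset_with_card_n[of "CARD('n) - m" "UNIV :: 'n set"] by auto
  then have K3: "indicator_hyperplane K"
    using assms by unfold_locales simp
  have "indicator_vec K \<noteq> 0"
    using K assms by (intro indicator_vec_nonzero) auto
  moreover have "card (- K) = m"
    using K assms by (simp add: Compl_eq_Diff_UNIV card_Diff_subset)
  moreover have "1 < 2 - 2 / real (card K)"
    using K assms by (simp add: field_simps)
  ultimately show ?thesis
    using indicator_hyperplane.minimal_projections[OF K3] is_norm_infnorm[where 'a="real^'n"]
      hyperplane_subspace_dim[of "indicator_vec K"]
    by (intro exI[of _ infnorm] exI[of _ "{x. indicator_vec K \<bullet> x = 0}"]) simp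
qed

theorem mainTheorem4:
  fixes m :: nat
  assumes "m < CARD('n::finite)"
  shows "(\<exists>(N :: real^'n \<Rightarrow> real) (Y :: (real^'n) set).
            is_norm N \<and> subspace Y \<and> dim Y = CARD('n) - 1 \<and>
            aff_dim (Pmin N Y) = int m)
       \<and> (m + 3 \<le> CARD('n) \<longrightarrow>
          (\<exists>(N :: real^'n \<Rightarrow> real) (Y :: (real^'n) set).
            is_norm N \<and> subspace Y \<and> dim Y = CARD('n) - 1 \<and>
            aff_dim (Pmin N Y) = int m \<and> proj_const N Y > 1))"
  using exists_hyperplane_aff_dim_Pmin[OF assms] exists_hyperplane_aff_dim_Pmin_proj_const_gt_1
  by blast

end
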